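(* Let $q$ be a power of an odd prime, $j\in\mathbb F_q$, $S_j=\{x\in\mathbb F_q^d:\|x\|=j\}$, $A\subset S_j$, $B\subset\mathbb F_q^d$, and for $t\in\mathbb F_q$ let $\mu(t)$ be the number of pairs $(a,b)\in A\times B$ with $\|a-b\|=t$. Then \[\sum_{t\in\mathbb F_q}\mu^2(t)\le\frac{|A|^2|B|^2}{q}+q^{d-1}|A||B|+q^{-2}\eta^d(-1)G_1^d|A|\sum_{b,b'\in B,\ s,r\ne0}\eta^d(r)\,\chi\Big(jr+\frac{s^2\|b'-b\|}{r}\Big)\chi\big(s(\|b'\|-\|b\|)\big).\]
   Context: $\chi$ is a nontrivial additive character of $\mathbb F_q$, $\|x\|=x_1^2+\cdots+x_d^2$, $\eta$ is the quadratic character of $\mathbb F_q^*$, $G_1=\sum_{t\in\mathbb F_q^*}\eta(t)\chi(t)$ is the standard Gauss sum, and $s,r$ range over $\mathbb F_q^*$. *)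

theory Defs
  imports "HOL-Analysis.Analysis"
begin

definition nontriv_add_char :: "('a::field \<Rightarrow> complex) \<Rightarrow> bool" where
  "nontriv_add_char \<psi> \<longleftrightarrow> \<psi> 0 = 1 \<and> (\<forall>x y. \<psi> (x + y) = \<psi> x * \<psi> y) \<and> (\<exists>x. \<psi> x \<noteq> 1)"

text \<open>Quadratic character of F^*, extended by 0 at 0 (only used on nonzero arguments).\<close>
definition qchar :: "'a::field \<Rightarrow> complex" where
  "qchar t = (if t = 0 then 0 else if (\<exists>y. y ^ 2 = t) then 1 else -1)"

definition gauss1 :: "('a::{field,finite} \<Rightarrow> complex) \<Rightarrow> complex" where
  "gauss1 \<psi> = (\<Sum>t\<in>{t::'a. t \<noteq> 0}. qchar t * \<psi> t)"

definition sqn :: "'a::field ^ 'n \<Rightarrow> 'a" where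
  "sqn x = (\<Sum>i\<in>UNIV. (x $ i) ^ 2)"

end

theory Submission
  imports Defs
begin

text \<open>Write S(s) for the sum of chi(s ||a - b||) over (a, b) in A x B. Orthogonality of chi gives
  sum_t mu(t)^2 = q^-1 sum_s |S(s)|^2, and s = 0 contributes |A|^2 |B|^2. For s <> 0, Cauchy-Schwarz
  in a together with A <= S_j bounds |S(s)|^2 by |A| times the energy E(s), the sum over a in S_j
  of |sum_b chi(s ||a - b||)|^2. Expanding the square turns E(s) into a sum over pairs b, b' of the
  Fourier transform of S_j at 2s(b' - b). Detecting S_j by characters and completing squares evaluates
  this transform through Gauss sums: the diagonal b = b' gives |B| q^(d-1) and the rest is the kernel
  of the statement. Summing over s <> 0 then only loses the factor (q - 1)/q on the diagonal.\<close>

lemma sum_UNIV_split_zero: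
  fixes f :: "'a::{zero,finite} \<Rightarrow> 'b::comm_monoid_add"
  shows "(\<Sum>x\<in>UNIV. f x) = f 0 + (\<Sum>x\<in>{x. x \<noteq> 0}. f x)"
proof -
  have "UNIV - {0} = {x::'a. x \<noteq> 0}" by auto
  with sum.remove[of UNIV 0 f] show ?thesis by simp
qed

lemma sum_vec_prod_eq_prod_sum:
  fixes f :: "'n::finite \<Rightarrow> 'a::finite \<Rightarrow> 'b::comm_semiring_1"
  shows "(\<Sum>x\<in>UNIV. \<Prod>i\<in>UNIV. f i (x $ i)) = (\<Prod>i\<in>UNIV. \<Sum>y\<in>UNIV. f i y)"
proof -
  have "(\<Prod>i\<in>UNIV. \<Sum>y\<in>UNIV. f i y) = (\<Sum>g\<in>PiE UNIV (\<lambda>_. UNIV). \<Prod>i\<in>UNIV. f i (g i))"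
    by (rule prod_sum_PiE) auto
  also have "PiE UNIV (\<lambda>_::'n. UNIV::'a set) = UNIV" by auto
  also have "(\<Sum>g\<in>UNIV. \<Prod>i\<in>UNIV. f i (g i)) = (\<Sum>x\<in>UNIV. \<Prod>i\<in>UNIV. f i (x $ i))"
    by (rule sum.reindex_bij_witness[of _ vec_nth vec_lambda]) auto
  finally show ?thesis ..
qed

lemma sum_card_fiber_squared:
  fixes f :: "'p \<Rightarrow> 'b::finite"
  assumes "finite P"
  shows "(\<Sum>t\<in>UNIV. card {p\<in>P. f p = t} ^ 2) = (\<Sum>p\<in>P. \<Sum>p'\<in>P. of_bool (f p = f p'))"
proof -
  have "card {p\<in>P. f p = t} = (\<Sum>p\<in>P. of_bool (f p = t))" for t
    using assms by (simp add: of_bool_def sum.inter_filter[symmetric])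
  then have "(\<Sum>t\<in>UNIV. card {p\<in>P. f p = t} ^ 2)
      = (\<Sum>t\<in>UNIV. \<Sum>p\<in>P. \<Sum>p'\<in>P. of_bool (f p = t) * of_bool (f p' = t))"
    by (simp only: power2_eq_square sum_product)
  also have "\<dots> = (\<Sum>p\<in>P. \<Sum>p'\<in>P. \<Sum>t\<in>UNIV. of_bool (f p = t) * of_bool (f p' = t))"
    by (simp only: sum.swap[of _ UNIV])
  also have "\<dots> = (\<Sum>p\<in>P. \<Sum>p'\<in>P. of_bool (f p = f p'))"
    by (intro sum.cong refl) (simp add: sum.delta)
  finally show ?thesis .
qed

definition dotp :: "'a::field ^ 'n \<Rightarrow> 'a ^ 'n \<Rightarrow> 'a" where
  "dotp m x = (\<Sum>i\<in>UNIV. m $ i * x $ i)"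

lemma dotp_scale: "dotp (c *s m) x = c * dotp m x"
  by (simp add: dotp_def sum_distrib_left mult.assoc)

lemma sqn_scale: "sqn (c *s v) = c\<^sup>2 * sqn (v :: 'a::field ^ 'n::finite)"
  by (simp add: sqn_def sum_distrib_left power_mult_distrib)

lemma sqn_minus_commute: "sqn (a - b) = sqn (b - a :: 'a::field ^ 'n::finite)"
  unfolding sqn_def by (rule sum.cong) (auto simp: power2_commute)

lemma sqn_diff_sub_sqn_diff:
  fixes a b b' :: "'a::field ^ 'n::finite"
  shows "sqn (a - b) - sqn (a - b') = sqn b - sqn b' + 2 * dotp (b' - b) a"
  unfolding sqn_def dotp_def sum_subtractf[symmetric] sum_distrib_left sum.distrib[symmetric]
  by (rule sum.cong) (simp_all add: power2_eq_square ring_distribs)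

section \<open>Quadratic character\<close>

lemma card_sqrt:
  assumes "(2::'a::{field,finite}) \<noteq> 0"
  shows "card {x::'a. x\<^sup>2 = u} = (if u = 0 then 1 else if \<exists>y. y\<^sup>2 = u then 2 else 0)"
proof (cases "\<exists>y. y\<^sup>2 = u")
  case True
  then obtain y where y: "y\<^sup>2 = u" by blast
  show ?thesis
  proof (cases "y = 0")
    case False
    have "y \<noteq> - y"
    proof
      assume "y = - y"
      then have "2 * y = 0" by simp
      with assms False show False by simp
    qed
    moreover have "{x. x\<^sup>2 = u} = {y, - y}"
      using y by (auto simp: power2_eq_iff)
    moreover have "u \<noteq> 0"
      using y False by auto
    ultimately show ?thesis
      using True by simp
  qed (use y in simp)
next
  case False
  then have "u \<noteq> 0" by (metis zero_power2)
  with False show ?thesis by simp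
qed

lemma of_nat_card_sqrt:
  assumes "(2::'a::{field,finite}) \<noteq> 0"
  shows "of_nat (card {x::'a. x\<^sup>2 = u}) = 1 + qchar u"
  using card_sqrt[OF assms, of u] by (simp add: qchar_def)

lemma card_nonzero_eq_twice_card_squares:
  assumes "(2::'a::{field,finite}) \<noteq> 0"
  shows "card {u::'a. u \<noteq> 0} = 2 * card {u::'a. u \<noteq> 0 \<and> (\<exists>y. y\<^sup>2 = u)}"
proof -
  let ?Q = "{u::'a. u \<noteq> 0 \<and> (\<exists>y. y\<^sup>2 = u)}"
  have "(\<lambda>x. x\<^sup>2) ` {u::'a. u \<noteq> 0} \<subseteq> ?Q" by auto
  then have "card {u::'a. u \<noteq> 0} = (\<Sum>u\<in>?Q. card {x\<in>{u::'a. u \<noteq> 0}. x\<^sup>2 = u})"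
    using sum.group[of "{u::'a. u \<noteq> 0}" ?Q "\<lambda>x. x\<^sup>2" "\<lambda>_. 1::nat"] by simp
  also have "\<dots> = (\<Sum>u\<in>?Q. 2)"
  proof (rule sum.cong)
    fix u assume "u \<in> ?Q"
    then have "{x\<in>{u::'a. u \<noteq> 0}. x\<^sup>2 = u} = {x. x\<^sup>2 = u}" by auto
    with \<open>u \<in> ?Q\<close> show "card {x\<in>{u::'a. u \<noteq> 0}. x\<^sup>2 = u} = 2"
      using card_sqrt[OF assms, of u] by auto
  qed simp
  finally show ?thesis by simp
qed

lemma square_mult_iff:
  assumes "(a::'a::field) \<noteq> 0" and "\<exists>y. y\<^sup>2 = a"
  shows "(\<exists>z. z\<^sup>2 = a * b) \<longleftrightarrow> (\<exists>z. z\<^sup>2 = b)"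
proof -
  obtain y where y: "y\<^sup>2 = a" "y \<noteq> 0"
    using assms by auto
  show ?thesis
  proof
    assume "\<exists>z. z\<^sup>2 = a * b"
    then obtain z where "z\<^sup>2 = a * b" by blast
    with y assms(1) have "(z / y)\<^sup>2 = b" by (simp add: power_divide)
    then show "\<exists>z. z\<^sup>2 = b" by blast
  next
    assume "\<exists>z. z\<^sup>2 = b"
    then obtain z where "z\<^sup>2 = b" by blast
    with y have "(y * z)\<^sup>2 = a * b" by (simp add: power_mult_distrib)
    then show "\<exists>z. z\<^sup>2 = a * b" by blast
  qed
qed

lemma card_nonsquares_eq_card_squares:
  assumes "(2::'a::{field,finite}) \<noteq> 0"
  shows "card {u::'a. u \<noteq> 0 \<and> \<not> (\<exists>y. y\<^sup>2 = u)} = card {u::'a. u \<noteq> 0 \<and> (\<exists>y. y\<^sup>2 = u)}"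
proof -
  let ?Q = "{u::'a. u \<noteq> 0 \<and> (\<exists>y. y\<^sup>2 = u)}"
  let ?N = "{u::'a. u \<noteq> 0 \<and> \<not> (\<exists>y. y\<^sup>2 = u)}"
  have "card {u::'a. u \<noteq> 0} = card (?Q \<union> ?N)"
    by (rule arg_cong[where f = card]) auto
  also have "\<dots> = card ?Q + card ?N"
    by (rule card_Un_disjoint) auto
  finally show ?thesis
    using card_nonzero_eq_twice_card_squares[OF assms] by simp
qed

text \<open>Multiplication by the nonsquare a maps the nonzero squares injectively into the nonsquares,
  which are equally many; so it hits b.\<close>

lemma nonsquare_mult_nonsquare:
  assumes "(2::'a::{field,finite}) \<noteq> 0"
    and a: "\<not> (\<exists>y. y\<^sup>2 = a)" and b: "\<not> (\<exists>y. y\<^sup>2 = b)"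
  shows "\<exists>y. y\<^sup>2 = (a * b :: 'a)"
proof -
  let ?Q = "{u::'a. u \<noteq> 0 \<and> (\<exists>y. y\<^sup>2 = u)}"
  let ?N = "{u::'a. u \<noteq> 0 \<and> \<not> (\<exists>y. y\<^sup>2 = u)}"
  have a0: "a \<noteq> 0"
    using a zero_power2 by auto
  have "(\<lambda>u. a * u) ` ?Q \<subseteq> ?N"
  proof
    fix v assume "v \<in> (\<lambda>u. a * u) ` ?Q"
    then obtain u where u: "u \<in> ?Q" "v = a * u" by blast
    then have "\<not> (\<exists>z. z\<^sup>2 = v)"
      using square_mult_iff[of u a] a by (simp add: mult.commute)
    with u a0 show "v \<in> ?N" by simp
  qed
  moreover have "card ((\<lambda>u. a * u) ` ?Q) = card ?N"
    using a0 card_nonsquares_eq_card_squares[OF assms(1)] by (simp add: card_image inj_on_def)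
  ultimately have "(\<lambda>u. a * u) ` ?Q = ?N"
    by (intro card_subset_eq) auto
  moreover have "b \<in> ?N"
    using b zero_power2 by auto
  ultimately have "b \<in> (\<lambda>u. a * u) ` ?Q" by simp
  then obtain y where "b = a * y\<^sup>2" by blast
  then have "a * b = (a * y)\<^sup>2" by (simp add: power2_eq_square)
  then show ?thesis by metis
qed

lemma qchar_mult:
  assumes "(2::'a::{field,finite}) \<noteq> 0"
  shows "qchar (a * b :: 'a) = qchar a * qchar b"
proof (cases "a = 0 \<or> b = 0")
  case False
  consider "\<exists>y. y\<^sup>2 = a" | "\<exists>y. y\<^sup>2 = b" | "\<not> (\<exists>y. y\<^sup>2 = a)" "\<not> (\<exists>y. y\<^sup>2 = b)"
    by blast
  then show ?thesis
  proof cases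
    case 1
    with False show ?thesis
      using square_mult_iff[of a b] by (simp add: qchar_def)
  next
    case 2
    with False show ?thesis
      using square_mult_iff[of b a] by (simp add: qchar_def mult.commute)
  next
    case 3
    with False show ?thesis
      using nonsquare_mult_nonsquare[OF assms 3] by (simp add: qchar_def)
  qed
qed (auto simp: qchar_def)

lemma qchar_inverse: "qchar (inverse t :: 'a::field) = qchar t"
proof -
  have "(\<exists>y. y\<^sup>2 = inverse t) \<longleftrightarrow> (\<exists>y::'a. y\<^sup>2 = t)"
    by (metis inverse_inverse_eq power_inverse)
  then show ?thesis by (simp add: qchar_def)
qed

section \<open>Additive characters and Gauss sums\<close>

locale add_char =
  fixes \<psi> :: "'a::{field,finite} \<Rightarrow> complex"
  assumes nontriv_add_char: "nontriv_add_char \<psi>"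
begin

lemma char_add: "\<psi> (x + y) = \<psi> x * \<psi> y"
  using nontriv_add_char by (simp add: nontriv_add_char_def)

lemma char_zero [simp]: "\<psi> 0 = 1"
  using nontriv_add_char by (simp add: nontriv_add_char_def)

lemma char_sum: "\<psi> (\<Sum>i\<in>I. f i) = (\<Prod>i\<in>I. \<psi> (f i))"
  by (induction I rule: infinite_finite_induct) (simp_all add: char_add)

lemma char_of_nat_mult: "\<psi> (of_nat k * x) = \<psi> x ^ k"
  by (induction k) (simp_all add: char_add distrib_right)

lemma char_minus_mult_self: "\<psi> (- x) * \<psi> x = 1"
  by (metis char_add add.left_inverse char_zero)

lemma norm_char: "norm (\<psi> x) = 1"
proof -
  have "\<psi> x ^ CHAR('a) = 1"
    using char_of_nat_mult[of "CHAR('a)" x] by simp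
  then have "norm (\<psi> x) = 1 \<or> CHAR('a) = 0"
    by (rule power_eq_1_iff)
  moreover have "CHAR('a) \<noteq> 0"
    using finite_imp_CHAR_pos[where 'a = 'a] by simp
  ultimately show ?thesis by simp
qed

lemma cnj_char: "cnj (\<psi> x) = \<psi> (- x)"
proof -
  have "\<psi> x * cnj (\<psi> x) = \<psi> x * \<psi> (- x)"
    using complex_norm_square[of "\<psi> x"] norm_char char_minus_mult_self by (simp add: mult.commute)
  moreover have "\<psi> x \<noteq> 0"
    using norm_char[of x] by auto
  ultimately show ?thesis by simp
qed

lemma sum_char_UNIV: "(\<Sum>x\<in>UNIV. \<psi> x) = 0"
proof -
  obtain a where a: "\<psi> a \<noteq> 1"
    using nontriv_add_char by (auto simp: nontriv_add_char_def)
  have "(\<Sum>x\<in>UNIV. \<psi> (a + x)) = (\<Sum>x\<in>UNIV. \<psi> x)"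
    by (rule sum.reindex_bij_witness[of _ "\<lambda>x. x - a" "\<lambda>x. a + x"]) auto
  then have "(\<psi> a - 1) * (\<Sum>x\<in>UNIV. \<psi> x) = 0"
    by (simp add: char_add sum_distrib_left algebra_simps)
  with a show ?thesis by simp
qed

lemma sum_char_mult_UNIV: "(\<Sum>x\<in>UNIV. \<psi> (c * x)) = (if c = 0 then of_nat CARD('a) else 0)"
proof (cases "c = 0")
  case False
  have "(\<Sum>x\<in>UNIV. \<psi> (c * x)) = (\<Sum>x\<in>UNIV. \<psi> x)"
    by (rule sum.reindex_bij_witness[of _ "\<lambda>x. x / c" "\<lambda>x. c * x"]) (use False in auto)
  with False show ?thesis by (simp add: sum_char_UNIV)
qed simp

lemma of_bool_eq_sum_char: "of_bool (u = v) = (\<Sum>s\<in>UNIV. \<psi> (s * (u - v))) / of_nat CARD('a)"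
  using sum_char_mult_UNIV[of "u - v"] by (simp add: mult.commute)

lemma norm_sum_char_squared:
  "complex_of_real ((norm (\<Sum>p\<in>P. \<psi> (f p)))\<^sup>2) = (\<Sum>p\<in>P. \<Sum>p'\<in>P. \<psi> (f p - f p'))"
  unfolding complex_norm_square by (simp add: cnj_sum cnj_char sum_product char_add[symmetric])

lemma sum_char_dotp:
  fixes m :: "'a ^ 'n::finite"
  shows "(\<Sum>x\<in>UNIV. \<psi> (dotp m x)) = (if m = 0 then of_nat CARD('a) ^ CARD('n) else 0)"
proof -
  have "(\<Sum>x\<in>UNIV. \<psi> (dotp m x)) = (\<Prod>i\<in>UNIV. \<Sum>y\<in>UNIV. \<psi> (m $ i * y))"
    by (simp add: dotp_def char_sum sum_vec_prod_eq_prod_sum[of "\<lambda>i y. \<psi> (m $ i * y)"])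
  also have "\<dots> = (\<Prod>i\<in>UNIV. if m $ i = 0 then of_nat CARD('a) else 0)"
    by (simp add: sum_char_mult_UNIV)
  also have "\<dots> = (if m = 0 then of_nat CARD('a) ^ CARD('n) else 0)"
    by (auto simp: vec_eq_iff)
  finally show ?thesis .
qed

lemma gauss1_eq_sum_UNIV: "gauss1 \<psi> = (\<Sum>t\<in>UNIV. qchar t * \<psi> t)"
  unfolding gauss1_def by (rule sum.mono_neutral_left) (auto simp: qchar_def)

end

locale odd_add_char = add_char \<psi> for \<psi> :: "'a::{field,finite} \<Rightarrow> complex" +
  assumes odd_char: "(2::'a) \<noteq> 0"
begin

lemma four_neq_zero: "(4::'a) \<noteq> 0"
  using odd_char by (metis mult_2_right mult_eq_0_iff numeral_Bit0)

lemma sum_char_quadratic: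
  assumes "r \<noteq> 0"
  shows "(\<Sum>x\<in>UNIV. \<psi> (r * x\<^sup>2)) = qchar r * gauss1 \<psi>"
proof -
  have "(\<Sum>x\<in>UNIV. \<psi> (r * x\<^sup>2)) = (\<Sum>u\<in>UNIV. \<Sum>x\<in>{x. x\<^sup>2 = u}. \<psi> (r * x\<^sup>2))"
    using sum.group[of UNIV UNIV "\<lambda>x. x\<^sup>2" "\<lambda>x. \<psi> (r * x\<^sup>2)"] by simp
  also have "\<dots> = (\<Sum>u\<in>UNIV. (1 + qchar u) * \<psi> (r * u))"
  proof (rule sum.cong)
    fix u :: 'a
    have "(\<Sum>x\<in>{x. x\<^sup>2 = u}. \<psi> (r * x\<^sup>2)) = (\<Sum>x\<in>{x. x\<^sup>2 = u}. \<psi> (r * u))"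
      by (rule sum.cong) auto
    then show "(\<Sum>x\<in>{x. x\<^sup>2 = u}. \<psi> (r * x\<^sup>2)) = (1 + qchar u) * \<psi> (r * u)"
      by (simp add: of_nat_card_sqrt[OF odd_char])
  qed simp
  also have "\<dots> = (\<Sum>u\<in>UNIV. \<psi> (r * u)) + (\<Sum>u\<in>UNIV. qchar u * \<psi> (r * u))"
    by (simp add: distrib_right sum.distrib)
  also have "(\<Sum>u\<in>UNIV. \<psi> (r * u)) = 0"
    using assms by (simp add: sum_char_mult_UNIV)
  also have "(\<Sum>u\<in>UNIV. qchar u * \<psi> (r * u)) = (\<Sum>t\<in>UNIV. qchar (t / r) * \<psi> t)"
    by (rule sum.reindex_bij_witness[of _ "\<lambda>t. t / r" "\<lambda>u. r * u"]) (use assms in auto)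
  also have "\<dots> = qchar r * gauss1 \<psi>"
    by (simp add: gauss1_eq_sum_UNIV sum_distrib_left divide_inverse
        qchar_mult[OF odd_char] qchar_inverse mult_ac)
  finally show ?thesis by simp
qed

lemma sum_char_quadratic_linear:
  assumes "r \<noteq> 0"
  shows "(\<Sum>x\<in>UNIV. \<psi> (r * x\<^sup>2 + m * x)) = qchar r * gauss1 \<psi> * \<psi> (- (m\<^sup>2 / (4 * r)))"
proof -
  define c where "c = m / (2 * r)"
  have m_eq: "m = 2 * r * c"
    using assms odd_char by (simp add: c_def)
  have "m\<^sup>2 / (4 * r) = r * c\<^sup>2"
    unfolding m_eq using assms four_neq_zero by (simp add: power2_eq_square field_simps)
  then have "r * x\<^sup>2 + m * x = r * (x + c)\<^sup>2 + - (m\<^sup>2 / (4 * r))" for x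
    by (simp add: m_eq power2_eq_square algebra_simps)
  then have "(\<Sum>x\<in>UNIV. \<psi> (r * x\<^sup>2 + m * x)) = (\<Sum>x\<in>UNIV. \<psi> (r * (x + c)\<^sup>2)) * \<psi> (- (m\<^sup>2 / (4 * r)))"
    by (simp only: char_add sum_distrib_right)
  also have "(\<Sum>x\<in>UNIV. \<psi> (r * (x + c)\<^sup>2)) = (\<Sum>x\<in>UNIV. \<psi> (r * x\<^sup>2))"
    by (rule sum.reindex_bij_witness[of _ "\<lambda>x. x - c" "\<lambda>x. x + c"]) auto
  finally show ?thesis
    using sum_char_quadratic[OF assms] by simp
qed

lemma sum_char_sqn_dotp:
  fixes m :: "'a ^ 'n::finite"
  assumes "r \<noteq> 0"
  shows "(\<Sum>x\<in>UNIV. \<psi> (r * sqn x + dotp m x))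
    = (qchar r * gauss1 \<psi>) ^ CARD('n) * \<psi> (- (sqn m / (4 * r)))"
proof -
  have "(\<Sum>x\<in>UNIV. \<psi> (r * sqn x + dotp m x)) = (\<Prod>i\<in>UNIV. \<Sum>y\<in>UNIV. \<psi> (r * y\<^sup>2 + m $ i * y))"
    by (simp add: sqn_def dotp_def sum_distrib_left sum.distrib[symmetric] char_sum
        sum_vec_prod_eq_prod_sum[of "\<lambda>i y. \<psi> (r * y\<^sup>2 + m $ i * y)"])
  also have "\<dots> = (\<Prod>i\<in>UNIV. qchar r * gauss1 \<psi> * \<psi> (- ((m $ i)\<^sup>2 / (4 * r))))"
    by (simp add: sum_char_quadratic_linear[OF assms])
  also have "\<dots> = (qchar r * gauss1 \<psi>) ^ CARD('n) * \<psi> (- (sqn m / (4 * r)))"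
    by (simp add: prod.distrib sqn_def sum_divide_distrib sum_negf[symmetric] char_sum)
  finally show ?thesis .
qed

lemma sum_char_sphere_phase:
  fixes m :: "'a ^ 'n::finite"
  assumes "r \<noteq> 0"
  shows "(\<Sum>x\<in>UNIV. \<psi> (r * (j - sqn x) + dotp m x))
    = (qchar (-1::'a) * gauss1 \<psi>) ^ CARD('n) * (qchar r ^ CARD('n) * \<psi> (j * r + sqn m / (4 * r)))"
proof -
  have "r * (j - sqn x) + dotp m x = j * r + ((- r) * sqn x + dotp m x)" for x
    by (simp add: algebra_simps)
  then have "(\<Sum>x\<in>UNIV. \<psi> (r * (j - sqn x) + dotp m x))
      = \<psi> (j * r) * (\<Sum>x\<in>UNIV. \<psi> ((- r) * sqn x + dotp m x))"
    by (simp only: char_add sum_distrib_left)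
  also have "\<dots> = \<psi> (j * r) * ((qchar (- r) * gauss1 \<psi>) ^ CARD('n) * \<psi> (sqn m / (4 * r)))"
    using sum_char_sqn_dotp[of "- r" m] assms by simp
  also have "qchar (- r) = qchar (-1::'a) * qchar r"
    using qchar_mult[OF odd_char, of "-1" r] by simp
  finally show ?thesis
    by (simp add: char_add power_mult_distrib mult_ac)
qed

lemma sum_char_sphere_dotp:
  fixes m :: "'a ^ 'n::finite"
  shows "(\<Sum>a\<in>{x. sqn x = j}. \<psi> (dotp m a))
   = ((if m = 0 then of_nat CARD('a) ^ CARD('n) else 0)
      + (qchar (-1::'a) * gauss1 \<psi>) ^ CARD('n)
        * (\<Sum>r\<in>{r. r \<noteq> 0}. qchar r ^ CARD('n) * \<psi> (j * r + sqn m / (4 * r))))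
     / of_nat CARD('a)"
proof -
  have "(\<Sum>a\<in>{x. sqn x = j}. \<psi> (dotp m a)) = (\<Sum>a\<in>UNIV. of_bool (j = sqn a) * \<psi> (dotp m a))"
    by (simp add: sum.inter_filter[symmetric] eq_commute)
  also have "\<dots> = (\<Sum>a\<in>UNIV. \<Sum>r\<in>UNIV. \<psi> (r * (j - sqn a) + dotp m a)) / of_nat CARD('a)"
    by (simp add: of_bool_eq_sum_char char_add sum_divide_distrib sum_distrib_right)
  also have "\<dots> = (\<Sum>r\<in>UNIV. \<Sum>a\<in>UNIV. \<psi> (r * (j - sqn a) + dotp m a)) / of_nat CARD('a)"
    by (subst sum.swap) (rule refl)
  also have "\<dots> = ((if m = 0 then of_nat CARD('a) ^ CARD('n) else 0)
      + (qchar (-1::'a) * gauss1 \<psi>) ^ CARD('n)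
        * (\<Sum>r\<in>{r. r \<noteq> 0}. qchar r ^ CARD('n) * \<psi> (j * r + sqn m / (4 * r))))
     / of_nat CARD('a)"
    unfolding sum_UNIV_split_zero[of "\<lambda>r. \<Sum>a\<in>UNIV. \<psi> (r * (j - sqn a) + dotp m a)"]
    by (simp add: sum_char_dotp sum_char_sphere_phase sum_distrib_left)
  finally show ?thesis .
qed

lemma sum_char_sphere_pair:
  fixes b b' :: "'a ^ 'n::finite"
  assumes "s \<noteq> 0"
  shows "(\<Sum>a\<in>{x. sqn x = j}. \<psi> (s * sqn (a - b) - s * sqn (a - b')))
   = ((if b = b' then of_nat CARD('a) ^ CARD('n) else 0)
      + (qchar (-1::'a) * gauss1 \<psi>) ^ CARD('n)
        * (\<Sum>r\<in>{r. r \<noteq> 0}. qchar r ^ CARD('n) * \<psi> (j * r + s\<^sup>2 * sqn (b - b') / r)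
             * \<psi> (s * (sqn b - sqn b'))))
     / of_nat CARD('a)"
proof -
  define m where "m = (2 * s) *s (b' - b)"
  have "s * sqn (a - b) - s * sqn (a - b') = s * (sqn b - sqn b') + dotp m a" for a
  proof -
    have "s * sqn (a - b) - s * sqn (a - b') = s * (sqn (a - b) - sqn (a - b'))"
      by (simp add: right_diff_distrib)
    also have "\<dots> = s * (sqn b - sqn b') + s * 2 * dotp (b' - b) a"
      by (simp add: sqn_diff_sub_sqn_diff distrib_left mult.assoc)
    also have "\<dots> = s * (sqn b - sqn b') + dotp m a"
      unfolding m_def dotp_scale by (simp add: mult_ac)
    finally show ?thesis .
  qed
  then have "(\<Sum>a\<in>{x. sqn x = j}. \<psi> (s * sqn (a - b) - s * sqn (a - b')))
      = \<psi> (s * (sqn b - sqn b')) * (\<Sum>a\<in>{x. sqn x = j}. \<psi> (dotp m a))"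
    by (simp add: char_add sum_distrib_left)
  moreover have "m = 0 \<longleftrightarrow> b = b'"
    using odd_char assms by (auto simp: m_def vec_eq_iff)
  moreover have "sqn m / (4 * r) = s\<^sup>2 * sqn (b - b') / r" for r
  proof -
    have "sqn m = 4 * (s\<^sup>2 * sqn (b - b'))"
      unfolding m_def sqn_scale by (simp add: power_mult_distrib sqn_minus_commute[of b'])
    then show ?thesis
      using four_neq_zero by simp
  qed
  ultimately show ?thesis
    by (cases "b = b'") (simp_all add: sum_char_sphere_dotp sum_distrib_left sum_distrib_right mult_ac)
qed

end

section \<open>Energy on the sphere\<close>

context add_char
begin

definition sphere_energy :: "'a \<Rightarrow> ('a ^ 'n::finite) set \<Rightarrow> 'a \<Rightarrow> real" where
  "sphere_energy j B s = (\<Sum>a\<in>{x. sqn x = j}. (norm (\<Sum>b\<in>B. \<psi> (s * sqn (a - b))))\<^sup>2)"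

lemma sum_card_fiber_squared_eq:
  fixes f :: "'p \<Rightarrow> 'a"
  assumes "finite P"
  shows "real (\<Sum>t\<in>UNIV. card {p\<in>P. f p = t} ^ 2)
    = (\<Sum>s\<in>UNIV. (norm (\<Sum>p\<in>P. \<psi> (s * f p)))\<^sup>2) / CARD('a)"
proof -
  have "complex_of_real (real (\<Sum>t\<in>UNIV. card {p\<in>P. f p = t} ^ 2))
      = (\<Sum>p\<in>P. \<Sum>p'\<in>P. of_bool (f p = f p'))"
    unfolding of_real_of_nat_eq sum_card_fiber_squared[OF assms] by simp
  also have "\<dots> = (\<Sum>p\<in>P. \<Sum>p'\<in>P. \<Sum>s\<in>UNIV. \<psi> (s * f p - s * f p')) / of_nat CARD('a)"
    by (simp add: of_bool_eq_sum_char right_diff_distrib sum_divide_distrib)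
  also have "(\<Sum>p\<in>P. \<Sum>p'\<in>P. \<Sum>s\<in>UNIV. \<psi> (s * f p - s * f p'))
      = (\<Sum>p\<in>P. \<Sum>s\<in>UNIV. \<Sum>p'\<in>P. \<psi> (s * f p - s * f p'))"
    by (rule sum.cong[OF refl], rule sum.swap)
  also have "\<dots> = (\<Sum>s\<in>UNIV. \<Sum>p\<in>P. \<Sum>p'\<in>P. \<psi> (s * f p - s * f p'))"
    by (rule sum.swap)
  also have "\<dots> / of_nat CARD('a)
      = complex_of_real ((\<Sum>s\<in>UNIV. (norm (\<Sum>p\<in>P. \<psi> (s * f p)))\<^sup>2) / CARD('a))"
    unfolding of_real_divide of_real_sum norm_sum_char_squared by simp
  finally show ?thesis
    by (simp only: of_real_eq_iff)
qed

lemma norm_sum_pairs_squared_le: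
  assumes "A \<subseteq> {x. sqn x = j}"
  shows "(norm (\<Sum>a\<in>A. \<Sum>b\<in>B. \<psi> (s * sqn (a - b))))\<^sup>2 \<le> card A * sphere_energy j B s"
proof -
  let ?T = "\<lambda>a. norm (\<Sum>b\<in>B. \<psi> (s * sqn (a - b)))"
  have "norm (\<Sum>a\<in>A. \<Sum>b\<in>B. \<psi> (s * sqn (a - b))) \<le> (\<Sum>a\<in>A. ?T a)"
    by (rule norm_sum)
  then have "(norm (\<Sum>a\<in>A. \<Sum>b\<in>B. \<psi> (s * sqn (a - b))))\<^sup>2 \<le> (\<Sum>a\<in>A. ?T a)\<^sup>2"
    by (rule power_mono) simp
  also have "\<dots> \<le> (\<Sum>a\<in>A. (?T a)\<^sup>2) * card A"
    by (rule sum_squared_le_sum_of_squares)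
  also have "(\<Sum>a\<in>A. (?T a)\<^sup>2) \<le> sphere_energy j B s"
    unfolding sphere_energy_def using assms by (intro sum_mono2) auto
  finally show ?thesis
    by (simp add: mult.commute mult_right_mono)
qed

lemma sum_pair_count_squared_le:
  fixes A B :: "('a ^ 'n::finite) set"
  assumes "A \<subseteq> {x. sqn x = j}"
  shows "real (\<Sum>t\<in>UNIV. card {(a, b). a \<in> A \<and> b \<in> B \<and> sqn (a - b) = t} ^ 2)
    \<le> (real (card A * card B))\<^sup>2 / CARD('a)
       + card A * (\<Sum>s\<in>{s. s \<noteq> 0}. sphere_energy j B s) / CARD('a)"
proof -
  define S where "S s = norm (\<Sum>a\<in>A. \<Sum>b\<in>B. \<psi> (s * sqn (a - b)))" for s
  have "{(a, b). a \<in> A \<and> b \<in> B \<and> sqn (a - b) = t} = {p\<in>A \<times> B. sqn (fst p - snd p) = t}" for t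
    by auto
  then have "real (\<Sum>t\<in>UNIV. card {(a, b). a \<in> A \<and> b \<in> B \<and> sqn (a - b) = t} ^ 2)
      = (\<Sum>s\<in>UNIV. (S s)\<^sup>2) / CARD('a)"
    using sum_card_fiber_squared_eq[of "A \<times> B" "\<lambda>p. sqn (fst p - snd p)"]
    by (simp add: S_def sum.cartesian_product case_prod_unfold)
  also have "(\<Sum>s\<in>UNIV. (S s)\<^sup>2) = (real (card A * card B))\<^sup>2 + (\<Sum>s\<in>{s. s \<noteq> 0}. (S s)\<^sup>2)"
    unfolding sum_UNIV_split_zero[of "\<lambda>s. (S s)\<^sup>2"] by (simp add: S_def norm_mult)
  finally have count_eq: "real (\<Sum>t\<in>UNIV. card {(a, b). a \<in> A \<and> b \<in> B \<and> sqn (a - b) = t} ^ 2)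
      = ((real (card A * card B))\<^sup>2 + (\<Sum>s\<in>{s. s \<noteq> 0}. (S s)\<^sup>2)) / CARD('a)" .
  have "(\<Sum>s\<in>{s. s \<noteq> 0}. (S s)\<^sup>2) \<le> card A * (\<Sum>s\<in>{s. s \<noteq> 0}. sphere_energy j B s)"
    unfolding S_def sum_distrib_left by (intro sum_mono norm_sum_pairs_squared_le[OF assms])
  then show ?thesis
    unfolding count_eq by (simp add: add_divide_distrib divide_right_mono)
qed

end

context odd_add_char
begin

lemma sphere_energy_eq:
  fixes B :: "('a ^ 'n::finite) set"
  assumes "s \<noteq> 0"
  shows "complex_of_real (sphere_energy j B s)
    = of_nat (card B * CARD('a) ^ (CARD('n) - 1))
      + (qchar (-1::'a) * gauss1 \<psi>) ^ CARD('n) / of_nat CARD('a)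
        * (\<Sum>b\<in>B. \<Sum>b'\<in>B. \<Sum>r\<in>{r. r \<noteq> 0}.
             qchar r ^ CARD('n) * \<psi> (j * r + s\<^sup>2 * sqn (b' - b) / r) * \<psi> (s * (sqn b' - sqn b)))"
proof -
  let ?S = "{x::'a ^ 'n. sqn x = j}"
  let ?K = "\<lambda>b b'. \<Sum>r\<in>{r. r \<noteq> 0}.
    qchar r ^ CARD('n) * \<psi> (j * r + s\<^sup>2 * sqn (b' - b) / r) * \<psi> (s * (sqn b' - sqn b))"
  let ?C = "(qchar (-1::'a) * gauss1 \<psi>) ^ CARD('n)"
  let ?q = "of_nat CARD('a) :: complex"
  have "complex_of_real (sphere_energy j B s)
      = (\<Sum>a\<in>?S. \<Sum>b\<in>B. \<Sum>b'\<in>B. \<psi> (s * sqn (a - b) - s * sqn (a - b')))"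
    by (simp only: sphere_energy_def of_real_sum norm_sum_char_squared)
  also have "\<dots> = (\<Sum>b\<in>B. \<Sum>a\<in>?S. \<Sum>b'\<in>B. \<psi> (s * sqn (a - b) - s * sqn (a - b')))"
    by (rule sum.swap)
  also have "\<dots> = (\<Sum>b\<in>B. \<Sum>b'\<in>B. \<Sum>a\<in>?S. \<psi> (s * sqn (a - b) - s * sqn (a - b')))"
    by (rule sum.cong[OF refl], rule sum.swap)
  also have "\<dots> = (\<Sum>b'\<in>B. \<Sum>b\<in>B. \<Sum>a\<in>?S. \<psi> (s * sqn (a - b) - s * sqn (a - b')))"
    \<comment> \<open>renaming b and b' puts the kernel in the orientation of the statement\<close>
    by (rule sum.swap)
  also have "\<dots> = (\<Sum>b\<in>B. \<Sum>b'\<in>B. ((if b' = b then ?q ^ CARD('n) else 0) + ?C * ?K b b') / ?q)"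
    by (simp add: sum_char_sphere_pair[OF assms])
  also have "\<dots> = of_nat (card B) * ?q ^ CARD('n) / ?q + ?C / ?q * (\<Sum>b\<in>B. \<Sum>b'\<in>B. ?K b b')"
    by (simp add: add_divide_distrib sum.distrib sum_distrib_left sum_divide_distrib[symmetric])
  also have "of_nat (card B) * ?q ^ CARD('n) / ?q = of_nat (card B * CARD('a) ^ (CARD('n) - 1))"
    by (cases "CARD('n)") simp_all
  finally show ?thesis .
qed

lemma sum_sphere_energy_eq:
  fixes B :: "('a ^ 'n::finite) set"
  shows "complex_of_real (\<Sum>s\<in>{s. s \<noteq> 0}. sphere_energy j B s)
    = of_nat ((CARD('a) - 1) * card B * CARD('a) ^ (CARD('n) - 1))
      + (qchar (-1::'a) * gauss1 \<psi>) ^ CARD('n) / of_nat CARD('a)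
        * (\<Sum>b\<in>B. \<Sum>b'\<in>B. \<Sum>s\<in>{s. s \<noteq> 0}. \<Sum>r\<in>{r. r \<noteq> 0}.
             qchar r ^ CARD('n) * \<psi> (j * r + s\<^sup>2 * sqn (b' - b) / r) * \<psi> (s * (sqn b' - sqn b)))"
proof -
  let ?N = "{s::'a. s \<noteq> 0}"
  let ?K = "\<lambda>s b b'. \<Sum>r\<in>{r. r \<noteq> 0}.
    qchar r ^ CARD('n) * \<psi> (j * r + s\<^sup>2 * sqn (b' - b) / r) * \<psi> (s * (sqn b' - sqn b))"
  let ?C = "(qchar (-1::'a) * gauss1 \<psi>) ^ CARD('n)"
  have "?N = UNIV - {0}" by auto
  then have card_N: "card ?N = CARD('a) - 1"
    by (simp add: card_Diff_singleton)
  have "(\<Sum>b\<in>B. \<Sum>b'\<in>B. \<Sum>s\<in>?N. ?K s b b') = (\<Sum>b\<in>B. \<Sum>s\<in>?N. \<Sum>b'\<in>B. ?K s b b')"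
    by (rule sum.cong[OF refl], rule sum.swap)
  also have "\<dots> = (\<Sum>s\<in>?N. \<Sum>b\<in>B. \<Sum>b'\<in>B. ?K s b b')"
    by (rule sum.swap)
  finally have swap: "(\<Sum>b\<in>B. \<Sum>b'\<in>B. \<Sum>s\<in>?N. ?K s b b') = (\<Sum>s\<in>?N. \<Sum>b\<in>B. \<Sum>b'\<in>B. ?K s b b')" .
  have "complex_of_real (\<Sum>s\<in>?N. sphere_energy j B s)
      = (\<Sum>s\<in>?N. of_nat (card B * CARD('a) ^ (CARD('n) - 1))
          + ?C / of_nat CARD('a) * (\<Sum>b\<in>B. \<Sum>b'\<in>B. ?K s b b'))"
    unfolding of_real_sum by (rule sum.cong[OF refl]) (simp add: sphere_energy_eq)
  also have "\<dots> = of_nat ((CARD('a) - 1) * card B * CARD('a) ^ (CARD('n) - 1))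
      + ?C / of_nat CARD('a) * (\<Sum>b\<in>B. \<Sum>b'\<in>B. \<Sum>s\<in>?N. ?K s b b')"
    unfolding swap by (simp add: sum.distrib sum_distrib_left card_N mult.assoc)
  finally show ?thesis .
qed

end

theorem lemma6p4:
  fixes \<psi> :: "'a::{field,finite} \<Rightarrow> complex"
    and j :: 'a
    and A B :: "('a ^ 'n) set"
  assumes odd_char: "(2::'a) \<noteq> 0"
    and chi: "nontriv_add_char \<psi>"
    and A_sphere: "A \<subseteq> {x. sqn x = j}"
  defines "\<mu> \<equiv> \<lambda>t::'a. card {(a, b). a \<in> A \<and> b \<in> B \<and> sqn (a - b) = t}"
    and "q \<equiv> CARD('a)"
    and "d \<equiv> CARD('n)"
  shows "(let R = of_nat (card A ^ 2 * card B ^ 2) / of_nat q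
              + of_nat (q ^ (d - 1) * card A * card B)
              + (qchar (-1::'a)) ^ d * (gauss1 \<psi>) ^ d * of_nat (card A) / of_nat (q ^ 2)
                * (\<Sum>b\<in>B. \<Sum>b'\<in>B. \<Sum>s\<in>{s::'a. s \<noteq> 0}. \<Sum>r\<in>{r::'a. r \<noteq> 0}.
                     (qchar r) ^ d * \<psi> (j * r + s ^ 2 * sqn (b' - b) / r)
                       * \<psi> (s * (sqn b' - sqn b)))
         in R \<in> \<real> \<and> real (\<Sum>t\<in>UNIV. (\<mu> t) ^ 2) \<le> Re R)"
proof -
  interpret odd_add_char \<psi>
    using chi odd_char by unfold_locales
  define E where "E = (\<Sum>s\<in>{s::'a. s \<noteq> 0}. sphere_energy j B s)"
  define N where "N = real ((q - 1) * card B * q ^ (d - 1))"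
  let ?K = "\<Sum>b\<in>B. \<Sum>b'\<in>B. \<Sum>s\<in>{s::'a. s \<noteq> 0}. \<Sum>r\<in>{r::'a. r \<noteq> 0}.
    (qchar r) ^ d * \<psi> (j * r + s ^ 2 * sqn (b' - b) / r) * \<psi> (s * (sqn b' - sqn b))"
  have bound: "real (\<Sum>t\<in>UNIV. (\<mu> t)\<^sup>2) \<le> (real (card A * card B))\<^sup>2 / q + card A * E / q"
    unfolding \<mu>_def E_def q_def by (rule sum_pair_count_squared_le[OF A_sphere])
  have energy: "(qchar (-1::'a) * gauss1 \<psi>) ^ d / of_nat q * ?K = of_real E - of_real N"
    using sum_sphere_energy_eq[of j B] unfolding E_def N_def q_def d_def
    by (simp add: eq_diff_eq add.commute)
  have "qchar (-1::'a) ^ d * gauss1 \<psi> ^ d * of_nat (card A) / of_nat (q\<^sup>2) * ?K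
      = of_nat (card A) / of_nat q * ((qchar (-1::'a) * gauss1 \<psi>) ^ d / of_nat q * ?K)"
    by (simp add: power_mult_distrib power2_eq_square)
  also have "\<dots> = of_real (card A * E / q - card A * N / q)"
    unfolding energy by (simp add: diff_divide_distrib right_diff_distrib)
  finally have R_eq: "qchar (-1::'a) ^ d * gauss1 \<psi> ^ d * of_nat (card A) / of_nat (q\<^sup>2) * ?K
      = of_real (card A * E / q - card A * N / q)" .
  have main_terms: "of_nat (card A ^ 2 * card B ^ 2) / of_nat q + of_nat (q ^ (d - 1) * card A * card B)
      = complex_of_real ((real (card A * card B))\<^sup>2 / q + real (q ^ (d - 1) * card A * card B))"
    by (simp add: power_mult_distrib)
  have "card A * ((q - 1) * card B * q ^ (d - 1)) \<le> q * (q ^ (d - 1) * card A * card B)"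
    using mult_le_mono1[of "q - 1" q "card A * card B * q ^ (d - 1)"] by (simp add: mult_ac)
  then have N_le: "card A * N / q \<le> real (q ^ (d - 1) * card A * card B)"
    unfolding N_def q_def by (simp add: pos_divide_le_eq flip: of_nat_mult)
  show ?thesis
    unfolding Let_def R_eq main_terms of_real_add[symmetric] Re_complex_of_real
    using bound N_le by simp
qed

end
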